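(* SD-EFX allocations need not exist, even for additive valuations: consider $m=4$ items $\{1,2,3,4\}$ and $n=2$ agents with identical additive valuations $v(\{1\})=4$, $v(\{2\})=1+\epsilon$, $v(\{3\})=1$, $v(\{4\})=1-\epsilon$ for a small $\epsilon\in(0,1)$, so that both agents have the ordering $\pi=1\succ 2\succ 3\succ 4$. Then no allocation of the four items is SD-EFX with respect to $\pi_1=\pi_2=\pi$.
   Context: For an ordering $\pi$ (best to worst), $A\succeq^{\mathrm{sd}}_\pi B$ iff $|A|\ge|B|$ and for every $k\le|B|$ the $k$-th best item of $A$ under $\pi$ is ranked weakly above the $k$-th best item of $B$. An allocation $(A_1,A_2)$ is a partition of all items; it is SD-EFX if for all agents $i,j$ with $A_j\neq\emptyset$ and all $g\in A_j$, $A_i\succeq^{\mathrm{sd}}_{\pi_i}A_j\setminus\{g\}$. *)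

theory Defs
  imports Complex_Main
begin

text \<open>An ordering \<pi> of the items is a distinct list, best item first.
  The rank of an item is its position in the list (smaller = better).\<close>

definition rank :: "'a list \<Rightarrow> 'a \<Rightarrow> nat" where
  "rank \<pi> x = (LEAST i. i < length \<pi> \<and> \<pi> ! i = x)"

text \<open>The items of A listed from best to worst under \<pi>; its k-th entry
  (0-based) is the (k+1)-th best item of A.\<close>

definition ordered_items :: "'a list \<Rightarrow> 'a set \<Rightarrow> 'a list" where
  "ordered_items \<pi> A = filter (\<lambda>x. x \<in> A) \<pi>"

definition sd_geq :: "'a list \<Rightarrow> 'a set \<Rightarrow> 'a set \<Rightarrow> bool" where
  "sd_geq \<pi> A B \<longleftrightarrow> card A \<ge> card B \<and>
     (\<forall>k < card B. rank \<pi> (ordered_items \<pi> A ! k) \<le> rank \<pi> (ordered_items \<pi> B ! k))"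

definition is_allocation :: "'a set \<Rightarrow> 'b set \<Rightarrow> ('b \<Rightarrow> 'a set) \<Rightarrow> bool" where
  "is_allocation M N A \<longleftrightarrow> (\<Union>i\<in>N. A i) = M \<and>
     (\<forall>i\<in>N. \<forall>j\<in>N. i \<noteq> j \<longrightarrow> A i \<inter> A j = {})"

definition sd_efx :: "'a set \<Rightarrow> 'b set \<Rightarrow> ('b \<Rightarrow> 'a list) \<Rightarrow> ('b \<Rightarrow> 'a set) \<Rightarrow> bool" where
  "sd_efx M N \<pi> A \<longleftrightarrow> is_allocation M N A \<and>
     (\<forall>i\<in>N. \<forall>j\<in>N. A j \<noteq> {} \<longrightarrow> (\<forall>g\<in>A j. sd_geq (\<pi> i) (A i) (A j - {g})))"

end

theory Submission
  imports Defs
begin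

text \<open>Whoever holds the top item x needs a second item: if the bundle is {x} alone, the
  other bundle has at least three items, and after removing one it still has more items
  than {x}. But if the bundle contains x and some z, then removing z leaves a bundle whose
  best item is x, and the other bundle, lacking x, cannot SD-dominate it. The valuation
  in the theorem only fixes the common ordering 1, 2, 3, 4.\<close>

lemma rank_Cons_self: "rank (x # xs) x = 0"
  unfolding rank_def by (rule Least_equality) auto

lemma rank_pos:
  assumes "y \<in> set (x # xs)" "y \<noteq> x"
  shows "0 < rank (x # xs) y"
proof -
  obtain i where i: "i < length (x # xs)" "(x # xs) ! i = y"
    using assms(1) unfolding in_set_conv_nth by blast
  have "rank (x # xs) y < length (x # xs) \<and> (x # xs) ! rank (x # xs) y = y"
    unfolding rank_def by (rule LeastI[of _ i]) (use i in blast)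
  with assms(2) show ?thesis by (cases "rank (x # xs) y") auto
qed

lemma set_ordered_items: "set (ordered_items \<pi> A) = set \<pi> \<inter> A"
  unfolding ordered_items_def by auto

lemma ordered_items_Cons_nth_0: "x \<in> A \<Longrightarrow> ordered_items (x # xs) A ! 0 = x"
  unfolding ordered_items_def by simp

lemma sd_geq_card_le: "sd_geq \<pi> A B \<Longrightarrow> card B \<le> card A"
  unfolding sd_geq_def by simp

lemma sd_geq_top_item:
  assumes sd: "sd_geq (x # xs) A B" and "x \<in> B" "finite B" and A: "A \<subseteq> set (x # xs)"
  shows "x \<in> A"
proof -
  let ?a = "ordered_items (x # xs) A ! 0"
  have "0 < card B" using assms(2,3) card_gt_0_iff by blast
  then have "0 < card A" using sd_geq_card_le[OF sd] by linarith
  then have "A \<noteq> {}" by auto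
  with A have "ordered_items (x # xs) A \<noteq> []"
    using set_ordered_items[of "x # xs" A] by (metis Int_absorb1 set_empty)
  then have a: "?a \<in> A" "?a \<in> set (x # xs)"
    using nth_mem[of 0 "ordered_items (x # xs) A"] set_ordered_items[of "x # xs" A] by auto
  have "rank (x # xs) ?a \<le> rank (x # xs) (ordered_items (x # xs) B ! 0)"
    using sd \<open>0 < card B\<close> unfolding sd_geq_def by blast
  then have "rank (x # xs) ?a = 0"
    by (simp add: ordered_items_Cons_nth_0[OF \<open>x \<in> B\<close>] rank_Cons_self)
  then have "?a = x" using rank_pos[OF a(2)] by fastforce
  with a(1) show ?thesis by simp
qed

lemma top_item_holder_envied:
  assumes \<pi>: "\<pi> = x # xs" "distinct \<pi>" "4 \<le> length \<pi>"
    and part: "X \<union> Y = set \<pi>" "X \<inter> Y = {}" and "x \<in> X"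
    and efx_X: "\<forall>g\<in>Y. sd_geq \<pi> X (Y - {g})"
    and efx_Y: "\<forall>g\<in>X. sd_geq \<pi> Y (X - {g})"
  shows False
proof (cases "X = {x}")
  case True
  then have Y: "Y = set xs" using part \<pi> by auto
  then have "3 \<le> card Y" using \<pi> by (simp add: distinct_card)
  then obtain g where g: "g \<in> Y" by fastforce
  have "2 \<le> card (Y - {g})" using \<open>3 \<le> card Y\<close> g Y by simp
  moreover have "card (Y - {g}) \<le> card X" using efx_X g sd_geq_card_le by blast
  ultimately show False using True by simp
next
  case False
  then obtain z where z: "z \<in> X" "z \<noteq> x" using \<open>x \<in> X\<close> by blast
  have "sd_geq (x # xs) Y (X - {z})" using efx_Y z \<pi>(1) by blast
  moreover have "finite (X - {z})" using part by (metis finite_Un finite_set finite_Diff)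
  ultimately have "x \<in> Y"
    using sd_geq_top_item[of x xs Y "X - {z}"] z \<open>x \<in> X\<close> part \<pi>(1) by blast
  with \<open>x \<in> X\<close> part show False by blast
qed

theorem no_sd_efx_two_agents_common_ordering:
  assumes "distinct \<pi>" "4 \<le> length \<pi>" "i \<noteq> j"
  shows "\<not> sd_efx (set \<pi>) {i, j} (\<lambda>_. \<pi>) A"
proof
  assume "sd_efx (set \<pi>) {i, j} (\<lambda>_. \<pi>) A"
  then have part: "A i \<union> A j = set \<pi>" "A i \<inter> A j = {}"
    and efx_i: "\<forall>g\<in>A j. sd_geq \<pi> (A i) (A j - {g})"
    and efx_j: "\<forall>g\<in>A i. sd_geq \<pi> (A j) (A i - {g})"
    using \<open>i \<noteq> j\<close> unfolding sd_efx_def is_allocation_def by auto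
  obtain x xs where \<pi>: "\<pi> = x # xs" using assms(2) by (cases \<pi>) auto
  then have "x \<in> A i \<or> x \<in> A j" using part by auto
  then show False
  proof
    assume "x \<in> A i"
    then show False using top_item_holder_envied[OF \<pi> assms(1,2) part] efx_i efx_j by blast
  next
    assume "x \<in> A j"
    then show False
      using top_item_holder_envied[OF \<pi> assms(1,2), of "A j" "A i"] part efx_i efx_j by blast
  qed
qed

theorem mainTheorem17:
  fixes \<epsilon> :: real and v :: "nat set \<Rightarrow> real"
  assumes "0 < \<epsilon>" and "\<epsilon> < 1"
    and "\<And>S. S \<subseteq> {1,2,3,4} \<Longrightarrow> v S = (\<Sum>x\<in>S. [4, 1 + \<epsilon>, 1, 1 - \<epsilon>] ! (x - 1))"
  shows "\<not> (\<exists>A :: nat \<Rightarrow> nat set.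
            sd_efx {1,2,3,4::nat} {1,2::nat} (\<lambda>_. [1,2,3,4]) A)"
  using no_sd_efx_two_agents_common_ordering[of "[1,2,3,4::nat]" "1::nat" 2] by simp

end
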